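(* Let $R$ be a commutative ring with identity and $a\in R$. Then $$\bigcap_{b\in R} b\Gamma_b(R)\subseteq a\Gamma_a(R)\subseteq S_a(R)\subseteq S(R)=\mathcal{N}(R)\subseteq \operatorname{Rad}(R).$$
   Context: For $b\in R$, $b\Gamma_{b}(R)=\{br \mid r\in R,\ b^{k}r=0 \text{ for some } k\in\mathbb{Z}^{+}\}$. An $R$-module $N$ is $b$-reduced if $b^2n=0$ implies $bn=0$ for $n\in N$, and reduced if it is $b$-reduced for all $b$. A proper ideal $I$ of $R$ is $a$-semiprime (resp. semiprime) if the $R$-module $R/I$ is $a$-reduced (resp. reduced). $S_a(R)$ and $S(R)$ are the intersections of all $a$-semiprime, resp. semiprime, ideals; $\mathcal{N}(R)$ is the set of nilpotent elements of $R$; $\operatorname{Rad}(R)$ is the Jacobson radical. *)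

theory Defs
  imports Main
begin

definition ideal :: "'a::comm_ring_1 set \<Rightarrow> bool" where
  "ideal I \<longleftrightarrow> 0 \<in> I \<and> (\<forall>x\<in>I. \<forall>y\<in>I. x + y \<in> I) \<and> (\<forall>r x. x \<in> I \<longrightarrow> r * x \<in> I)"

definition proper_ideal :: "'a::comm_ring_1 set \<Rightarrow> bool" where
  "proper_ideal I \<longleftrightarrow> ideal I \<and> I \<noteq> UNIV"

definition maximal_ideal :: "'a::comm_ring_1 set \<Rightarrow> bool" where
  "maximal_ideal M \<longleftrightarrow> proper_ideal M \<and> (\<forall>J. proper_ideal J \<and> M \<subseteq> J \<longrightarrow> J = M)"

definition Jacobson_rad :: "'a::comm_ring_1 set" where
  "Jacobson_rad = \<Inter>{M. maximal_ideal M}"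

definition nilradical :: "'a::comm_ring_1 set" where
  "nilradical = {x. \<exists>n. x ^ n = 0}"

definition bGamma :: "'a::comm_ring_1 \<Rightarrow> 'a set" where
  "bGamma b = {b * r | r. \<exists>k::nat. k > 0 \<and> b ^ k * r = 0}"

text \<open>The module R/I is b-reduced: b^2 n = 0 implies b n = 0 in R/I,
  i.e. b^2 r \<in> I implies b r \<in> I.\<close>
definition a_semiprime :: "'a::comm_ring_1 \<Rightarrow> 'a set \<Rightarrow> bool" where
  "a_semiprime a I \<longleftrightarrow> proper_ideal I \<and> (\<forall>r. a ^ 2 * r \<in> I \<longrightarrow> a * r \<in> I)"

definition semiprime :: "'a::comm_ring_1 set \<Rightarrow> bool" where
  "semiprime I \<longleftrightarrow> proper_ideal I \<and> (\<forall>b r. b ^ 2 * r \<in> I \<longrightarrow> b * r \<in> I)"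

definition S_a :: "'a::comm_ring_1 \<Rightarrow> 'a set" where
  "S_a a = \<Inter>{I. a_semiprime a I}"

definition S_all :: "'a::comm_ring_1 set" where
  "S_all = \<Inter>{I. semiprime I}"

end

theory Submission
  imports Defs
begin

text \<open>If \<open>a\<^sup>k r = 0\<close> with \<open>k > 0\<close>, then \<open>a\<^sup>k r\<close> lies in every ideal, and the
  \<open>a\<close>-semiprime condition lowers the exponent step by step down to \<open>a r\<close>; so
  \<open>a\<Gamma>\<^sub>a(R)\<close> lies in every \<open>a\<close>-semiprime ideal. Semiprime ideals are \<open>a\<close>-semiprime for
  every \<open>a\<close>, and a nilpotent \<open>x\<close> lies in \<open>x\<Gamma>\<^sub>x(R)\<close>, so nilpotents lie in every
  semiprime ideal; conversely the nilradical is itself semiprime, since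
  \<open>(b r)\<^sup>2 = (b\<^sup>2 r) r\<close>. Finally a nilpotent \<open>x\<close> outside a maximal ideal \<open>M\<close> would give
  \<open>1 = m + r x\<close> with \<open>m \<in> M\<close>, and \<open>m = 1 - r x\<close> is a unit because \<open>r x\<close> is nilpotent.\<close>

lemma ideal_zero: "ideal I \<Longrightarrow> 0 \<in> I"
  unfolding ideal_def by blast

lemma ideal_add: "ideal I \<Longrightarrow> x \<in> I \<Longrightarrow> y \<in> I \<Longrightarrow> x + y \<in> I"
  unfolding ideal_def by blast

lemma ideal_mult_left: "ideal I \<Longrightarrow> x \<in> I \<Longrightarrow> r * x \<in> I"
  unfolding ideal_def by blast

lemma ideal_mult_right: "ideal I \<Longrightarrow> x \<in> I \<Longrightarrow> x * r \<in> I"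
  using ideal_mult_left by (metis mult.commute)

lemma ideal_eq_UNIV_if_one_mem: "ideal I \<Longrightarrow> (1::'a::comm_ring_1) \<in> I \<Longrightarrow> I = UNIV"
  using ideal_mult_right by fastforce

lemma ideal_add_principal:
  assumes "ideal M"
  shows "ideal {m + r * x | m r. m \<in> M}"
  unfolding ideal_def
proof (intro conjI ballI allI impI)
  show "0 \<in> {m + r * x | m r. m \<in> M}"
    using ideal_zero[OF assms] by (auto intro!: exI[of _ 0])
next
  fix u v assume "u \<in> {m + r * x | m r. m \<in> M}" "v \<in> {m + r * x | m r. m \<in> M}"
  then obtain m1 r1 m2 r2 where "u = m1 + r1 * x" "v = m2 + r2 * x" "m1 \<in> M" "m2 \<in> M"
    by blast
  then have "u + v = (m1 + m2) + (r1 + r2) * x" "m1 + m2 \<in> M"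
    using ideal_add[OF assms] by (simp_all add: algebra_simps)
  then show "u + v \<in> {m + r * x | m r. m \<in> M}" by blast
next
  fix s u assume "u \<in> {m + r * x | m r. m \<in> M}"
  then obtain m1 r1 where "u = m1 + r1 * x" "m1 \<in> M" by blast
  then have "s * u = s * m1 + (s * r1) * x" "s * m1 \<in> M"
    using ideal_mult_left[OF assms] by (simp_all add: algebra_simps)
  then show "s * u \<in> {m + r * x | m r. m \<in> M}" by blast
qed

lemma maximal_ideal_one_eq_add:
  assumes M: "maximal_ideal M" and x: "x \<notin> M"
  obtains m r where "m \<in> M" "1 = m + r * x"
proof -
  let ?J = "{m + r * x | m r. m \<in> M}"
  have "ideal M" using M unfolding maximal_ideal_def proper_ideal_def by blast
  then have "ideal ?J" by (rule ideal_add_principal)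
  moreover have "M \<subseteq> ?J" by (force intro: exI[of _ 0])
  moreover have "x \<in> ?J" using ideal_zero[OF \<open>ideal M\<close>] by (force intro: exI[of _ 1])
  ultimately have "?J = UNIV"
    using M x unfolding maximal_ideal_def proper_ideal_def by blast
  then show thesis using that by blast
qed

lemma nilpotent_add:
  fixes x y :: "'a::comm_ring_1"
  assumes "x ^ m = 0" "y ^ n = 0"
  shows "(x + y) ^ (m + n) = 0"
proof -
  have "of_nat ((m + n) choose k) * x ^ k * y ^ (m + n - k) = 0" for k
  proof (cases "m \<le> k")
    case True
    then have "x ^ k = x ^ m * x ^ (k - m)" by (simp flip: power_add)
    then show ?thesis using assms by simp
  next
    case False
    then have "m + n - k = n + (m - k)" by simp
    then have "y ^ (m + n - k) = y ^ n * y ^ (m - k)" by (simp add: power_add)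
    then show ?thesis using assms by simp
  qed
  then show ?thesis by (simp add: binomial_ring)
qed

lemma ideal_nilradical: "ideal (nilradical :: 'a::comm_ring_1 set)"
  unfolding ideal_def nilradical_def
proof (intro conjI ballI allI impI)
  show "0 \<in> {x :: 'a. \<exists>n. x ^ n = 0}" by (auto intro: exI[of _ 1])
next
  fix x y :: 'a assume "x \<in> {x. \<exists>n. x ^ n = 0}" "y \<in> {x. \<exists>n. x ^ n = 0}"
  then show "x + y \<in> {x. \<exists>n. x ^ n = 0}" using nilpotent_add by blast
next
  fix r x :: 'a assume "x \<in> {x. \<exists>n. x ^ n = 0}"
  then obtain n where "x ^ n = 0" by blast
  then have "(r * x) ^ n = 0" by (simp add: power_mult_distrib)
  then show "r * x \<in> {x. \<exists>n. x ^ n = 0}" by blast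
qed

lemma nilradical_reduced:
  fixes b r :: "'a::comm_ring_1"
  assumes "b ^ 2 * r \<in> nilradical"
  shows "b * r \<in> nilradical"
proof -
  obtain n where n: "(b ^ 2 * r) ^ n = 0" using assms unfolding nilradical_def by blast
  have "(b * r) ^ 2 = (b ^ 2 * r) * r" by (simp add: power2_eq_square ac_simps)
  then have "(b * r) ^ (2 * n) = ((b ^ 2 * r) * r) ^ n" by (simp add: power_mult)
  also have "\<dots> = 0" using n by (simp add: power_mult_distrib)
  finally show ?thesis unfolding nilradical_def by blast
qed

lemma semiprime_nilradical:
  "nilradical \<noteq> (UNIV :: 'a::comm_ring_1 set) \<Longrightarrow> semiprime (nilradical :: 'a set)"
  unfolding semiprime_def proper_ideal_def
  using ideal_nilradical nilradical_reduced by blast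

lemma nilpotent_mem_bGamma:
  assumes "x ^ n = 0"
  shows "x \<in> bGamma x"
proof -
  have "x = x * 1" "Suc n > 0" "x ^ Suc n * 1 = 0" using assms by simp_all
  then show ?thesis unfolding bGamma_def by blast
qed

lemma reduced_power_descent:
  fixes b :: "'a::comm_ring_1"
  assumes reduced: "\<And>s. b ^ 2 * s \<in> I \<Longrightarrow> b * s \<in> I"
  shows "b ^ Suc k * r \<in> I \<Longrightarrow> b * r \<in> I"
proof (induction k)
  case (Suc k)
  then have "b ^ 2 * (b ^ k * r) \<in> I" by (simp add: power2_eq_square mult.assoc)
  then show ?case using Suc.IH reduced by (simp add: mult.assoc)
qed simp

lemma bGamma_subset_if_a_semiprime:
  assumes "a_semiprime a I"
  shows "bGamma a \<subseteq> I"
proof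
  fix x assume "x \<in> bGamma a"
  then obtain r k where x: "x = a * r" and "k > 0" "a ^ k * r = 0"
    unfolding bGamma_def by blast
  then obtain j where "a ^ Suc j * r = 0" using gr0_implies_Suc by blast
  moreover have "ideal I" using assms unfolding a_semiprime_def proper_ideal_def by blast
  ultimately have "a ^ Suc j * r \<in> I" using ideal_zero by simp
  then show "x \<in> I"
    using reduced_power_descent assms x unfolding a_semiprime_def by blast
qed

lemma a_semiprime_if_semiprime: "semiprime I \<Longrightarrow> a_semiprime a I"
  unfolding semiprime_def a_semiprime_def by blast

lemma bGamma_subset_S_a: "bGamma a \<subseteq> S_a a"
  unfolding S_a_def using bGamma_subset_if_a_semiprime by blast

lemma S_a_subset_S_all: "S_a a \<subseteq> S_all"
  unfolding S_a_def S_all_def using a_semiprime_if_semiprime by blast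

lemma S_all_eq_nilradical: "(S_all :: 'a::comm_ring_1 set) = nilradical"
proof
  show "S_all \<subseteq> (nilradical :: 'a set)"
    using semiprime_nilradical unfolding S_all_def by fastforce
  show "nilradical \<subseteq> (S_all :: 'a set)"
  proof
    fix x :: 'a assume "x \<in> nilradical"
    then have "x \<in> bGamma x" using nilpotent_mem_bGamma unfolding nilradical_def by blast
    then show "x \<in> S_all"
      using bGamma_subset_if_a_semiprime a_semiprime_if_semiprime unfolding S_all_def by blast
  qed
qed

lemma maximal_ideal_nilpotent_mem:
  fixes x :: "'a::comm_ring_1"
  assumes M: "maximal_ideal M" and x: "x ^ n = 0"
  shows "x \<in> M"
proof (rule ccontr)
  assume "x \<notin> M"
  with M obtain m r where "m \<in> M" "1 = m + r * x" by (rule maximal_ideal_one_eq_add)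
  then have "1 - r * x \<in> M" by (metis add_diff_cancel_right')
  have iM: "ideal M" using M unfolding maximal_ideal_def proper_ideal_def by blast
  have "1 = (1 - r * x) * (\<Sum>i<n. (r * x) ^ i)"
    using one_diff_power_eq[of "r * x" n] x by (simp add: power_mult_distrib)
  then have "1 \<in> M" using ideal_mult_right[OF iM \<open>1 - r * x \<in> M\<close>] by metis
  then show False
    using ideal_eq_UNIV_if_one_mem[OF iM] M unfolding maximal_ideal_def proper_ideal_def by blast
qed

lemma nilradical_subset_Jacobson_rad: "nilradical \<subseteq> Jacobson_rad"
  unfolding Jacobson_rad_def nilradical_def using maximal_ideal_nilpotent_mem by blast

theorem mainTheorem13:
  fixes a :: "'a::comm_ring_1"
  shows "(\<Inter>b. bGamma b) \<subseteq> bGamma a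
         \<and> bGamma a \<subseteq> S_a a
         \<and> S_a a \<subseteq> (S_all :: 'a set)
         \<and> (S_all :: 'a set) = nilradical
         \<and> (nilradical :: 'a set) \<subseteq> Jacobson_rad"
  using bGamma_subset_S_a S_a_subset_S_all S_all_eq_nilradical nilradical_subset_Jacobson_rad
  by blast

end
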